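(* Consider a neutral evolutionary model on $N$ sites given by a replacement rule $p$ satisfying the fixation assumption described in the context, with replacement probabilities $e_{ij}$, birth rates $b_i$, death rates $d_i$, total birth rate $B>0$, site-specific fixation probabilities $\rho_i$, overall fixation probability $\rho=\frac{1}{B}\sum_{i=1}^N d_i\rho_i$ and molecular clock rate $K=Nu\rho$ (for a mutation probability $u>0$ per reproduction). Then $\rho_i=1/N$ for all $i=1,\ldots,N$ if and only if $b_i=d_i$ for all $i=1,\ldots,N$. In particular, if $b_i=d_i$ for all $i$, then $\rho=1/N$ and consequently $K=u$.
   Context: There are $N$ sites $1,\ldots,N$, each always occupied by one individual of type M (mutant) or R (resident); a state is $\mathbf{s}\in\{\mathrm{M},\mathrm{R}\}^N$. A replacement event is a pair $(R,\alpha)$ with $R\subseteq\{1,\ldots,N\}$ and $\alpha:R\to\{1,\ldots,N\}$. A replacement rule is a probability distribution $p(R,\alpha)$ on replacement events, independent of the state. The evolutionary Markov chain: at each time-step an event $(R,\alpha)$ is drawn with probability $p(R,\alpha)$ and the new state is $s_i'=s_i$ if $i\notin R$, $s_i'=s_{\alpha(i)}$ if $i\in R$. Fixation assumption: there exist a site $i$ and a finite sequence of replacement events, each of positive probability, such that if these events occur consecutively (from any initial state) every site ends up carrying the type initially at site $i$. Define $e_{ij}=\sum_{(R,\alpha):\, j\in R,\ \alpha(j)=i}p(R,\alpha)$, $b_i=\sum_j e_{ij}$, $d_i=\sum_j e_{ji}$, $B=\sum_{i,j}e_{ij}$. The site-specific fixation probability $\rho_i$ is the probability that the chain started from the state with M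 at site $i$ and R elsewhere is eventually absorbed in $(\mathrm{M},\ldots,\mathrm{M})$. *)

theory Defs
  imports "HOL-Probability.Probability"
begin

text \<open>Sites form a finite type 's (N = CARD('s)). A state assigns to each site its type:
  True = M (mutant), False = R (resident).
  A replacement event (R, alpha) is encoded as a partial map ea :: 's => 's option
  with R = dom ea and alpha(j) = the (ea j) for j in R.
  A replacement rule is a pmf over replacement events.\<close>

type_synonym 's state = "'s \<Rightarrow> bool"
type_synonym 's event = "'s \<Rightarrow> 's option"

definition apply_event :: "'s event \<Rightarrow> 's state \<Rightarrow> 's state" where
  "apply_event ea s = (\<lambda>i. case ea i of None \<Rightarrow> s i | Some j \<Rightarrow> s j)"

definition evo_step :: "'s event pmf \<Rightarrow> 's state \<Rightarrow> 's state pmf" where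
  "evo_step p s = map_pmf (\<lambda>ea. apply_event ea s) p"

primrec dist_n :: "'s event pmf \<Rightarrow> nat \<Rightarrow> 's state \<Rightarrow> 's state pmf" where
  "dist_n p 0 s = return_pmf s"
| "dist_n p (Suc n) s = bind_pmf (dist_n p n s) (evo_step p)"

definition fixation_assumption :: "'s event pmf \<Rightarrow> bool" where
  "fixation_assumption p \<longleftrightarrow>
     (\<exists>i eas. (\<forall>ea \<in> set eas. pmf p ea > 0) \<and>
        (\<forall>s :: 's state. \<forall>j. foldl (\<lambda>t ea. apply_event ea t) s eas j = s i))"

definition e_rate :: "'s event pmf \<Rightarrow> 's \<Rightarrow> 's \<Rightarrow> real" where
  "e_rate p i j = measure_pmf.prob p {ea. ea j = Some i}"

definition birth_rate :: "'s event pmf \<Rightarrow> 's \<Rightarrow> real" where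
  "birth_rate p i = (\<Sum>j\<in>UNIV. e_rate p i j)"

definition death_rate :: "'s event pmf \<Rightarrow> 's \<Rightarrow> real" where
  "death_rate p i = (\<Sum>j\<in>UNIV. e_rate p j i)"

definition total_birth :: "'s event pmf \<Rightarrow> real" where
  "total_birth p = (\<Sum>i\<in>UNIV. \<Sum>j\<in>UNIV. e_rate p i j)"

definition single_mutant :: "'s \<Rightarrow> 's state" where
  "single_mutant i = (\<lambda>j. j = i)"

text \<open>Site-specific fixation probability: probability of eventual absorption in the
  all-M state. Since all-M is absorbing, the events "absorbed by time n" increase
  to "eventually absorbed", so this is the supremum over n of the probability of
  being in all-M at time n.\<close>
definition fix_prob :: "'s event pmf \<Rightarrow> 's \<Rightarrow> real" where
  "fix_prob p i = (SUP n. pmf (dist_n p n (single_mutant i)) (\<lambda>_. True))"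

definition overall_fix_prob :: "'s event pmf \<Rightarrow> real" where
  "overall_fix_prob p = (1 / total_birth p) * (\<Sum>i\<in>UNIV. death_rate p i * fix_prob p i)"

definition clock_rate :: "'s event pmf \<Rightarrow> real \<Rightarrow> real" where
  "clock_rate p u = real CARD('s) * u * overall_fix_prob (p :: 's event pmf)"

end

theory Submission
  imports Defs
begin

text \<open>Run the chain backwards: the state after n steps is s \<circ> F, where the genealogy F
  maps every site to the site whose initial occupant it descends from and is a product of n
  independent one-step ancestor maps. The fixation assumption makes the probability that F is
  not constant submultiplicative in n and eventually below 1, hence it tends to 0; so
  P(F k = i) tends to \<rho>(i) for every site k. With M the one-step ancestor matrix, the rows
  P(F k = -) evolve by right multiplication with M, so \<rho> = \<rho> M, and the column sums of M
  are 1 + b(i) - d(i). A uniform \<rho> therefore forces b = d. Conversely, if b = d then M is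
  doubly stochastic, every column of its powers sums to 1, and in the limit N \<rho>(i) = 1.\<close>

lemma measure_pmf_prob_eq_sum:
  fixes A :: "'a::finite pmf"
  shows "measure_pmf.prob A S = (\<Sum>x\<in>UNIV. pmf A x * of_bool (x \<in> S))"
  by (simp add: measure_measure_pmf_finite sum.If_cases Int_absorb1)

lemma pmf_bind_finite:
  fixes A :: "'a::finite pmf"
  shows "pmf (bind_pmf A f) y = (\<Sum>x\<in>UNIV. pmf A x * pmf (f x) y)"
  by (simp add: pmf_bind integral_measure_pmf[of UNIV] mult.commute)

lemma measure_pmf_prob_bind:
  fixes A :: "'a::finite pmf" and f :: "'a \<Rightarrow> 'b::finite pmf"
  shows "measure_pmf.prob (bind_pmf A f) S = (\<Sum>x\<in>UNIV. pmf A x * measure_pmf.prob (f x) S)"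
proof -
  have "measure_pmf.prob (bind_pmf A f) S
      = (\<Sum>y\<in>UNIV. (\<Sum>x\<in>UNIV. pmf A x * pmf (f x) y) * of_bool (y \<in> S))"
    by (simp only: measure_pmf_prob_eq_sum pmf_bind_finite)
  also have "\<dots> = (\<Sum>x\<in>UNIV. \<Sum>y\<in>UNIV. pmf A x * (pmf (f x) y * of_bool (y \<in> S)))"
    by (simp only: sum_distrib_right mult.assoc) (rule sum.swap)
  also have "\<dots> = (\<Sum>x\<in>UNIV. pmf A x * measure_pmf.prob (f x) S)"
    by (simp only: sum_distrib_left[symmetric] measure_pmf_prob_eq_sum)
  finally show ?thesis .
qed

lemma measure_pmf_prob_preimage:
  fixes A :: "'a::finite pmf" and g :: "'a \<Rightarrow> 'b::finite"
  shows "measure_pmf.prob A {x. g x \<in> S}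
       = (\<Sum>y\<in>UNIV. measure_pmf.prob A {x. g x = y} * of_bool (y \<in> S))"
  using measure_pmf_prob_eq_sum[of "map_pmf g A" S] by (simp add: pmf_map vimage_def)

lemma sum_measure_pmf_prob:
  fixes A :: "'a::finite pmf" and P :: "'k::finite \<Rightarrow> 'a \<Rightarrow> bool"
  shows "(\<Sum>k\<in>UNIV. measure_pmf.prob A {x. P k x})
       = (\<Sum>x\<in>UNIV. pmf A x * (\<Sum>k\<in>UNIV. of_bool (P k x)))"
  by (simp only: measure_pmf_prob_eq_sum mem_Collect_eq sum_distrib_left) (rule sum.swap)

lemma pmf_map_ge: "pmf A x \<le> pmf (map_pmf g A) (g x)"
proof -
  have "pmf A x = measure_pmf.prob A {x}" by (simp add: measure_pmf_single)
  also have "\<dots> \<le> measure_pmf.prob A (g -` {g x})"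
    by (rule measure_pmf.finite_measure_mono) auto
  finally show ?thesis by (simp add: pmf_map)
qed

text \<open>Through the event ea, site k inherits the type of site ancestor ea k.\<close>

definition ancestor :: "'s event \<Rightarrow> 's \<Rightarrow> 's" where
  "ancestor ea k = (case ea k of None \<Rightarrow> k | Some j \<Rightarrow> j)"

primrec genealogy :: "'s event pmf \<Rightarrow> nat \<Rightarrow> ('s \<Rightarrow> 's) pmf" where
  "genealogy p 0 = return_pmf id"
| "genealogy p (Suc n) = bind_pmf (genealogy p n) (\<lambda>F. map_pmf (\<lambda>ea. F \<circ> ancestor ea) p)"

lemma apply_event_eq_comp_ancestor: "apply_event ea s = s \<circ> ancestor ea"
  by (auto simp: apply_event_def ancestor_def fun_eq_iff split: option.splits)

lemma dist_n_eq_map_genealogy: "dist_n p n s = map_pmf (\<lambda>F. s \<circ> F) (genealogy p n)"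
  by (induction n) (simp_all add: evo_step_def bind_map_pmf map_bind_pmf pmf.map_comp o_def
      apply_event_eq_comp_ancestor)

lemma genealogy_add:
  "genealogy p (n + m) = bind_pmf (genealogy p n) (\<lambda>F. map_pmf (\<lambda>G. F \<circ> G) (genealogy p m))"
  by (induction m) (simp_all add: bind_return_pmf' bind_assoc_pmf bind_map_pmf map_bind_pmf
      pmf.map_comp o_def)

lemma genealogy_one: "genealogy p 1 = map_pmf ancestor p"
  unfolding One_nat_def by (simp add: bind_return_pmf)

lemma foldl_apply_event_eq_comp:
  "foldl (\<lambda>t ea. apply_event ea t) (s \<circ> F) eas = s \<circ> foldl (\<lambda>F ea. F \<circ> ancestor ea) F eas"
  by (induction eas arbitrary: F) (simp_all add: apply_event_eq_comp_ancestor comp_assoc)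

lemma pmf_genealogy_foldl_ge:
  fixes p :: "('s::finite) event pmf"
  shows "prod_list (map (pmf p) eas)
       \<le> pmf (genealogy p (length eas)) (foldl (\<lambda>F ea. F \<circ> ancestor ea) id eas)"
proof (induction eas rule: rev_induct)
  case Nil
  then show ?case by (simp add: indicator_def id_def)
next
  case (snoc e eas)
  let ?F = "foldl (\<lambda>F ea. F \<circ> ancestor ea) id eas"
  let ?step = "\<lambda>G. map_pmf (\<lambda>ea. G \<circ> ancestor ea) p"
  have "prod_list (map (pmf p) (eas @ [e])) = prod_list (map (pmf p) eas) * pmf p e" by simp
  also have "\<dots> \<le> pmf (genealogy p (length eas)) ?F * pmf (?step ?F) (?F \<circ> ancestor e)"
    by (intro mult_mono snoc.IH pmf_map_ge pmf_nonneg)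
  also have "\<dots> \<le> (\<Sum>G\<in>UNIV. pmf (genealogy p (length eas)) G * pmf (?step G) (?F \<circ> ancestor e))"
    by (rule member_le_sum[of ?F, where
          f = "\<lambda>G. pmf (genealogy p (length eas)) G * pmf (?step G) (?F \<circ> ancestor e)"]) auto
  also have "\<dots> = pmf (genealogy p (length (eas @ [e])))
                     (foldl (\<lambda>F ea. F \<circ> ancestor ea) id (eas @ [e]))"
    by (simp only: pmf_bind_finite genealogy.simps length_append_singleton
        foldl_append foldl_Cons foldl_Nil)
  finally show ?case .
qed

definition coalesced_at :: "'s \<Rightarrow> ('s \<Rightarrow> 's) set" where
  "coalesced_at i = {F. \<forall>j. F j = i}"

definition uncoalesced :: "('s \<Rightarrow> 's) set" where
  "uncoalesced = {F. \<forall>i. \<exists>j. F j \<noteq> i}"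

lemma comp_uncoalesced: "F \<circ> G \<in> uncoalesced \<Longrightarrow> F \<in> uncoalesced \<and> G \<in> uncoalesced"
  by (auto simp: uncoalesced_def) (metis comp_apply)+

lemma fix_prob_eq_SUP_coalesced:
  "fix_prob p i = (SUP n. measure_pmf.prob (genealogy p n) (coalesced_at i))"
proof -
  have "(\<lambda>F. single_mutant i \<circ> F) -` {\<lambda>_. True} = coalesced_at i"
    by (auto simp: coalesced_at_def single_mutant_def fun_eq_iff)
  then have "pmf (dist_n p n (single_mutant i)) (\<lambda>_. True)
           = measure_pmf.prob (genealogy p n) (coalesced_at i)" for n
    by (simp only: dist_n_eq_map_genealogy pmf_map)
  then show ?thesis
    by (simp only: fix_prob_def)
qed

lemma incseq_prob_coalesced:
  fixes p :: "('s::finite) event pmf"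
  shows "incseq (\<lambda>n. measure_pmf.prob (genealogy p n) (coalesced_at i))"
proof (rule incseq_SucI)
  fix n
  let ?step = "\<lambda>F. map_pmf (\<lambda>ea. F \<circ> ancestor ea) p"
  have "measure_pmf.prob (genealogy p n) (coalesced_at i)
      = (\<Sum>F\<in>UNIV. pmf (genealogy p n) F * of_bool (F \<in> coalesced_at i))"
    by (rule measure_pmf_prob_eq_sum)
  also have "\<dots> \<le> (\<Sum>F\<in>UNIV. pmf (genealogy p n) F * measure_pmf.prob (?step F) (coalesced_at i))"
  proof (rule sum_mono)
    fix F
    have "measure_pmf.prob (?step F) (coalesced_at i) = 1" if "F \<in> coalesced_at i"
      using that by (simp add: coalesced_at_def)
    then show "pmf (genealogy p n) F * of_bool (F \<in> coalesced_at i)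
             \<le> pmf (genealogy p n) F * measure_pmf.prob (?step F) (coalesced_at i)"
      by (cases "F \<in> coalesced_at i") simp_all
  qed
  also have "\<dots> = measure_pmf.prob (genealogy p (Suc n)) (coalesced_at i)"
    by (simp add: measure_pmf_prob_bind)
  finally show "measure_pmf.prob (genealogy p n) (coalesced_at i)
              \<le> measure_pmf.prob (genealogy p (Suc n)) (coalesced_at i)" .
qed

lemma tendsto_prob_coalesced_fix_prob:
  fixes p :: "('s::finite) event pmf"
  shows "(\<lambda>n. measure_pmf.prob (genealogy p n) (coalesced_at i)) \<longlonglongrightarrow> fix_prob p i"
  unfolding fix_prob_eq_SUP_coalesced
  by (rule LIMSEQ_incseq_SUP[OF _ incseq_prob_coalesced]) (auto intro: bdd_aboveI[of _ 1])

lemma prob_uncoalesced_add_le: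
  fixes p :: "('s::finite) event pmf"
  shows "measure_pmf.prob (genealogy p (n + m)) uncoalesced
       \<le> measure_pmf.prob (genealogy p n) uncoalesced
          * measure_pmf.prob (genealogy p m) uncoalesced"
proof -
  let ?c = "measure_pmf.prob (genealogy p m) uncoalesced"
  let ?comp = "\<lambda>F. map_pmf (\<lambda>G. F \<circ> G) (genealogy p m)"
  have "measure_pmf.prob (genealogy p (n + m)) uncoalesced
      = (\<Sum>F\<in>UNIV. pmf (genealogy p n) F * measure_pmf.prob (?comp F) uncoalesced)"
    by (simp add: genealogy_add measure_pmf_prob_bind)
  also have "\<dots> \<le> (\<Sum>F\<in>UNIV. pmf (genealogy p n) F * of_bool (F \<in> uncoalesced) * ?c)"
  proof (rule sum_mono)
    fix F
    have "measure_pmf.prob (?comp F) uncoalesced \<le> of_bool (F \<in> uncoalesced) * ?c"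
    proof (cases "F \<in> uncoalesced")
      case True
      have "(\<lambda>G. F \<circ> G) -` uncoalesced \<subseteq> uncoalesced" using comp_uncoalesced by blast
      then show ?thesis
        using True by (simp add: measure_pmf.finite_measure_mono)
    next
      case False
      then have "(\<lambda>G. F \<circ> G) -` uncoalesced = {}" using comp_uncoalesced by blast
      then show ?thesis using False by simp
    qed
    then show "pmf (genealogy p n) F * measure_pmf.prob (?comp F) uncoalesced
             \<le> pmf (genealogy p n) F * of_bool (F \<in> uncoalesced) * ?c"
      by (simp add: mult_left_mono mult.assoc)
  qed
  also have "\<dots> = measure_pmf.prob (genealogy p n) uncoalesced * ?c"
    by (simp only: measure_pmf_prob_eq_sum[of "genealogy p n"] sum_distrib_right)
  finally show ?thesis .
qed

lemma prob_uncoalesced_less_1: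
  fixes p :: "('s::finite) event pmf"
  assumes "fixation_assumption p"
  obtains L where "measure_pmf.prob (genealogy p L) uncoalesced < 1"
proof -
  obtain i eas where pos: "\<forall>ea \<in> set eas. pmf p ea > 0"
    and fix_i: "\<forall>s :: 's state. \<forall>j. foldl (\<lambda>t ea. apply_event ea t) s eas j = s i"
    using assms unfolding fixation_assumption_def by (elim exE conjE) (rule that)
  let ?F = "foldl (\<lambda>F ea. F \<circ> ancestor ea) id eas"
  let ?G = "genealogy p (length eas)"
  have "?F j = i" for j
    using fix_i[rule_format, of "\<lambda>k. k = i" j] foldl_apply_event_eq_comp[of "\<lambda>k. k = i" id eas]
    by simp
  then have "uncoalesced \<subseteq> space (measure_pmf ?G) - {?F}"
    by (auto simp: uncoalesced_def)
  then have "measure_pmf.prob ?G uncoalesced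
           \<le> measure_pmf.prob ?G (space (measure_pmf ?G) - {?F})"
    by (rule measure_pmf.finite_measure_mono) simp
  also have "\<dots> = 1 - pmf ?G ?F"
    using measure_pmf.prob_compl[of "{?F}" ?G] by (simp add: measure_pmf_single)
  also have "\<dots> < 1"
  proof -
    have "0 < prod_list (map (pmf p) eas)"
      using pos by (induction eas) auto
    then show ?thesis
      using pmf_genealogy_foldl_ge[of p eas] by simp
  qed
  finally show ?thesis by (rule that)
qed

lemma submultiplicative_tendsto_zero:
  fixes c :: "nat \<Rightarrow> real"
  assumes nonneg: "\<And>n. 0 \<le> c n" and le_1: "\<And>n. c n \<le> 1"
    and submult: "\<And>n m. c (n + m) \<le> c n * c m" and less_1: "c L < 1"
  shows "c \<longlonglongrightarrow> 0"
proof -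
  have "decseq c"
  proof (rule decseq_SucI)
    fix n
    have "c (Suc n) \<le> c n * c 1" using submult[of n 1] by simp
    also have "\<dots> \<le> c n" using nonneg[of n] le_1[of 1] by (simp add: mult_left_le)
    finally show "c (Suc n) \<le> c n" .
  qed
  then obtain l where lim: "c \<longlonglongrightarrow> l" and l_le: "\<forall>n. l \<le> c n"
    using decseq_convergent[of c 0] nonneg by blast
  have powers: "c (m * L) \<le> c L ^ m" for m
  proof (induction m)
    case 0
    then show ?case using le_1 by simp
  next
    case (Suc m)
    have "c (Suc m * L) \<le> c (m * L) * c L"
      using submult[of "m * L" L] by (simp add: add.commute)
    also have "\<dots> \<le> c L ^ m * c L" using Suc nonneg[of L] by (rule mult_right_mono)
    finally show ?case by (simp add: mult.commute)
  qed
  have "(\<lambda>m. c L ^ m) \<longlonglongrightarrow> 0"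
    using nonneg[of L] less_1 by (intro LIMSEQ_power_zero) simp
  then have "l \<le> 0"
    by (rule LIMSEQ_le_const) (use l_le powers order_trans in blast)
  moreover have "0 \<le> l"
    using lim by (rule LIMSEQ_le_const) (use nonneg in blast)
  ultimately show ?thesis using lim by simp
qed

lemma tendsto_prob_uncoalesced_zero:
  fixes p :: "('s::finite) event pmf"
  assumes "fixation_assumption p"
  shows "(\<lambda>n. measure_pmf.prob (genealogy p n) uncoalesced) \<longlonglongrightarrow> 0"
proof -
  obtain L where "measure_pmf.prob (genealogy p L) uncoalesced < 1"
    using prob_uncoalesced_less_1[OF assms] .
  then show ?thesis
    by (intro submultiplicative_tendsto_zero prob_uncoalesced_add_le) auto
qed

definition ancestor_prob :: "'s event pmf \<Rightarrow> nat \<Rightarrow> 's \<Rightarrow> 's \<Rightarrow> real" where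
  "ancestor_prob p n k i = measure_pmf.prob (genealogy p n) {F. F k = i}"

lemma tendsto_ancestor_prob_fix_prob:
  fixes p :: "('s::finite) event pmf"
  assumes "fixation_assumption p"
  shows "(\<lambda>n. ancestor_prob p n k i) \<longlonglongrightarrow> fix_prob p i"
proof (rule tendsto_sandwich[OF _ _ tendsto_prob_coalesced_fix_prob])
  let ?a = "\<lambda>n. measure_pmf.prob (genealogy p n) (coalesced_at i)"
  let ?c = "\<lambda>n. measure_pmf.prob (genealogy p n) uncoalesced"
  have "coalesced_at i \<subseteq> {F. F k = i}" and "{F. F k = i} \<subseteq> coalesced_at i \<union> uncoalesced"
    by (auto simp: coalesced_at_def uncoalesced_def)
  then have "?a n \<le> ancestor_prob p n k i" and "ancestor_prob p n k i \<le> ?a n + ?c n" for n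
    unfolding ancestor_prob_def
    by (simp_all add: measure_pmf.finite_measure_mono
        order_trans[OF measure_pmf.finite_measure_mono measure_Un_le])
  then show "\<forall>\<^sub>F n in sequentially. ?a n \<le> ancestor_prob p n k i"
    and "\<forall>\<^sub>F n in sequentially. ancestor_prob p n k i \<le> ?a n + ?c n"
    by simp_all
  show "(\<lambda>n. ?a n + ?c n) \<longlonglongrightarrow> fix_prob p i"
    using tendsto_add[OF tendsto_prob_coalesced_fix_prob tendsto_prob_uncoalesced_zero[OF assms]]
    by simp
qed

lemma measure_pmf_prob_comp_independent:
  fixes A B :: "('s::finite \<Rightarrow> 's) pmf"
  shows "measure_pmf.prob (bind_pmf A (\<lambda>F. map_pmf (\<lambda>G. F \<circ> G) B)) {H. H k = i}
       = (\<Sum>m\<in>UNIV. measure_pmf.prob B {G. G k = m} * measure_pmf.prob A {F. F m = i})"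
proof -
  have fibres: "measure_pmf.prob B {G. F (G k) = i}
              = (\<Sum>m\<in>UNIV. measure_pmf.prob B {G. G k = m} * of_bool (F m = i))" for F
    using measure_pmf_prob_preimage[of B "\<lambda>G. G k" "{m. F m = i}"] by simp
  have "measure_pmf.prob (bind_pmf A (\<lambda>F. map_pmf (\<lambda>G. F \<circ> G) B)) {H. H k = i}
      = (\<Sum>F\<in>UNIV. pmf A F * measure_pmf.prob B {G. F (G k) = i})"
    by (simp add: measure_pmf_prob_bind vimage_def)
  also have "\<dots> = (\<Sum>F\<in>UNIV. \<Sum>m\<in>UNIV.
                     pmf A F * (measure_pmf.prob B {G. G k = m} * of_bool (F m = i)))"
    by (simp only: fibres sum_distrib_left)
  also have "\<dots> = (\<Sum>m\<in>UNIV.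
                     measure_pmf.prob B {G. G k = m} * (\<Sum>F\<in>UNIV. pmf A F * of_bool (F m = i)))"
    by (subst sum.swap) (simp only: sum_distrib_left mult.left_commute)
  also have "\<dots> = (\<Sum>m\<in>UNIV. measure_pmf.prob B {G. G k = m} * measure_pmf.prob A {F. F m = i})"
    by (simp only: measure_pmf_prob_eq_sum mem_Collect_eq)
  finally show ?thesis .
qed

lemma ancestor_prob_Suc:
  fixes p :: "('s::finite) event pmf"
  shows "ancestor_prob p (Suc n) k i
       = (\<Sum>m\<in>UNIV. ancestor_prob p n k m * ancestor_prob p 1 m i)"
  unfolding ancestor_prob_def Suc_eq_plus1_left genealogy_add
  by (rule measure_pmf_prob_comp_independent)

lemma ancestor_prob_one: "ancestor_prob p 1 k m = measure_pmf.prob p {ea. ancestor ea k = m}"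
  unfolding ancestor_prob_def genealogy_one by (simp add: vimage_def)

lemma sum_of_bool_ancestor_eq:
  fixes ea :: "('s::finite) event"
  shows "(\<Sum>k\<in>UNIV. of_bool (ancestor ea k = m) :: real)
       = (\<Sum>k\<in>UNIV. of_bool (ea k = Some m)) + 1 - (\<Sum>j\<in>UNIV. of_bool (ea m = Some j))"
proof -
  have "of_bool (ancestor ea k = m)
      = of_bool (ea k = Some m) + (if k = m then of_bool (ea m = None) else 0 :: real)" for k
    by (auto simp: ancestor_def split: option.split)
  moreover have "(\<Sum>j\<in>UNIV. of_bool (ea m = Some j) :: real) = 1 - of_bool (ea m = None)"
    by (cases "ea m") (simp_all add: of_bool_def sum.delta')
  ultimately show ?thesis by (simp add: sum.distrib)
qed

lemma sum_ancestor_prob_one: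
  fixes p :: "('s::finite) event pmf"
  shows "(\<Sum>k\<in>UNIV. ancestor_prob p 1 k m) = 1 + birth_rate p m - death_rate p m"
proof -
  have birth: "birth_rate p m = (\<Sum>ea\<in>UNIV. pmf p ea * (\<Sum>k\<in>UNIV. of_bool (ea k = Some m)))"
    by (simp only: birth_rate_def e_rate_def sum_measure_pmf_prob)
  have death: "death_rate p m = (\<Sum>ea\<in>UNIV. pmf p ea * (\<Sum>j\<in>UNIV. of_bool (ea m = Some j)))"
    by (simp only: death_rate_def e_rate_def sum_measure_pmf_prob)
  have "(\<Sum>k\<in>UNIV. ancestor_prob p 1 k m)
      = (\<Sum>ea\<in>UNIV. pmf p ea * ((\<Sum>k\<in>UNIV. of_bool (ea k = Some m)) + 1
                                   - (\<Sum>j\<in>UNIV. of_bool (ea m = Some j))))"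
    by (simp only: ancestor_prob_one sum_measure_pmf_prob sum_of_bool_ancestor_eq)
  also have "\<dots> = birth_rate p m + (\<Sum>ea\<in>UNIV. pmf p ea) - death_rate p m"
    unfolding birth death by (simp add: sum.distrib sum_subtractf distrib_left right_diff_distrib)
  also have "(\<Sum>ea\<in>UNIV. pmf p ea) = 1"
    by (rule sum_pmf_eq_1) auto
  finally show ?thesis by simp
qed

lemma fix_prob_stationary:
  fixes p :: "('s::finite) event pmf"
  assumes "fixation_assumption p"
  shows "fix_prob p i = (\<Sum>m\<in>UNIV. fix_prob p m * ancestor_prob p 1 m i)"
proof -
  fix k :: 's
  have "(\<lambda>n. ancestor_prob p (Suc n) k i) \<longlonglongrightarrow> fix_prob p i"
    using tendsto_ancestor_prob_fix_prob[OF assms] by (rule LIMSEQ_Suc)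
  moreover have "(\<lambda>n. ancestor_prob p (Suc n) k i)
                   \<longlonglongrightarrow> (\<Sum>m\<in>UNIV. fix_prob p m * ancestor_prob p 1 m i)"
    unfolding ancestor_prob_Suc
    by (intro tendsto_sum tendsto_mult tendsto_ancestor_prob_fix_prob[OF assms] tendsto_const)
  ultimately show ?thesis by (rule LIMSEQ_unique)
qed

lemma sum_ancestor_prob_eq_1:
  fixes p :: "('s::finite) event pmf"
  assumes "\<And>m. (\<Sum>k\<in>UNIV. ancestor_prob p 1 k m) = 1"
  shows "(\<Sum>k\<in>UNIV. ancestor_prob p n k i) = 1"
proof (induction n arbitrary: i)
  case 0
  then show ?case by (simp add: ancestor_prob_def indicator_def)
next
  case (Suc n)
  have "(\<Sum>k\<in>UNIV. ancestor_prob p (Suc n) k i)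
      = (\<Sum>m\<in>UNIV. (\<Sum>k\<in>UNIV. ancestor_prob p n k m) * ancestor_prob p 1 m i)"
    by (simp only: ancestor_prob_Suc sum_distrib_right) (rule sum.swap)
  also have "\<dots> = 1"
    using Suc assms by simp
  finally show ?case .
qed

lemma fix_prob_uniform_iff_birth_eq_death:
  fixes p :: "('s::finite) event pmf"
  assumes "fixation_assumption p"
  shows "(\<forall>i. fix_prob p i = 1 / real CARD('s)) \<longleftrightarrow> (\<forall>i. birth_rate p i = death_rate p i)"
proof
  assume uniform: "\<forall>i. fix_prob p i = 1 / real CARD('s)"
  show "\<forall>i. birth_rate p i = death_rate p i"
  proof
    fix i
    have "1 / real CARD('s) = (\<Sum>m\<in>UNIV. 1 / real CARD('s) * ancestor_prob p 1 m i)"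
      using fix_prob_stationary[OF assms, of i] by (simp only: uniform)
    also have "\<dots> = 1 / real CARD('s) * (1 + birth_rate p i - death_rate p i)"
      by (simp only: sum_distrib_left[symmetric] sum_ancestor_prob_one)
    finally show "birth_rate p i = death_rate p i" by simp
  qed
next
  assume balanced: "\<forall>i. birth_rate p i = death_rate p i"
  show "\<forall>i. fix_prob p i = 1 / real CARD('s)"
  proof
    fix i
    have "(\<Sum>k\<in>UNIV. ancestor_prob p n k i) = 1" for n
      by (rule sum_ancestor_prob_eq_1) (simp only: sum_ancestor_prob_one balanced add_diff_cancel)
    moreover have "(\<lambda>n. \<Sum>k\<in>UNIV. ancestor_prob p n k i)
                     \<longlonglongrightarrow> (\<Sum>k\<in>(UNIV :: 's set). fix_prob p i)"
      by (intro tendsto_sum tendsto_ancestor_prob_fix_prob[OF assms])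
    ultimately have "(\<lambda>n. 1) \<longlonglongrightarrow> real CARD('s) * fix_prob p i"
      by simp
    from LIMSEQ_unique[OF tendsto_const this] show "fix_prob p i = 1 / real CARD('s)"
      by (simp add: field_simps)
  qed
qed

theorem mainTheorem2:
  fixes p :: "('s::finite) event pmf" and u :: real
  assumes fixa: "fixation_assumption p"
    and Bpos: "total_birth p > 0"
    and upos: "u > 0"
  shows "((\<forall>i. fix_prob p i = 1 / real CARD('s)) \<longleftrightarrow> (\<forall>i. birth_rate p i = death_rate p i))
         \<and> ((\<forall>i. birth_rate p i = death_rate p i) \<longrightarrow>
              overall_fix_prob p = 1 / real CARD('s) \<and> clock_rate p u = u)"
proof -
  have total: "(\<Sum>i\<in>UNIV. death_rate p i) = total_birth p"
    unfolding death_rate_def total_birth_def by (rule sum.swap)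
  have "overall_fix_prob p = 1 / real CARD('s)" if "\<forall>i. birth_rate p i = death_rate p i"
  proof -
    have "\<forall>i. fix_prob p i = 1 / real CARD('s)"
      using that fix_prob_uniform_iff_birth_eq_death[OF fixa] by blast
    then show ?thesis
      using Bpos total by (simp add: overall_fix_prob_def sum_divide_distrib[symmetric])
  qed
  \<comment> \<open>K = u holds for every u.\<close>
  then show ?thesis
    using fix_prob_uniform_iff_birth_eq_death[OF fixa] by (simp add: clock_rate_def)
qed

end
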